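(* Assume $d/2<p<d$, let $U\sim N(0,I_d)$ and for $b\ge0$ define \[Q(b)=\int_{\{|x|\ge b\}}\frac{1}{|x|^p}\,\mathbb{E}\frac{1_{\{|x+U|\ge b\}}}{|x+U|^p}dx.\] Then \[\lim_{b\to\infty}b^{2p-d}Q(b)=\frac{d\omega_d}{2p-d}.\]
   Context: $\omega_d$ denotes the volume of the unit ball in $\mathbb{R}^d$; $N(0,I_d)$ is the standard $d$-dimensional normal distribution. *)

theory Defs
  imports "HOL-Analysis.Analysis"
begin

definition std_gauss_density :: "'a::euclidean_space \<Rightarrow> real" where
  "std_gauss_density u = (2 * pi) powr (- real DIM('a) / 2) * exp (- (norm u)\<^sup>2 / 2)"

definition std_normal_vec :: "'a::euclidean_space measure" where
  "std_normal_vec = density lborel (\<lambda>u. ennreal (std_gauss_density u))"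

definition Qfun :: "'a::euclidean_space itself \<Rightarrow> real \<Rightarrow> real \<Rightarrow> real" where
  "Qfun _ p b =
     (LINT x : {x::'a. norm x \<ge> b} | lborel.
        (1 / norm x powr p) *
        (LINT u | (std_normal_vec :: 'a measure).
            indicator {y::'a. norm y \<ge> b} (x + u) / norm (x + u) powr p))"

end

theory Submission
  imports Defs "HOL-Probability.Probability"
begin

text \<open>Substituting x = b y gives b^(2p-d) Q(b) = \<integral> g(y) K_b(y) dy with
  g(y) = 1{|y| \<ge> 1} |y|^-p and K_b(y) = E g(y + U/b). Off the unit sphere K_b(y) \<rightarrow> g(y),
  and since Gaussian tails beat every power, K_b(y) \<le> C |y|^-p for |y| \<ge> 1 uniformly in b \<ge> 1.
  As 2p > d, g^2 is integrable, so by dominated convergence the limit is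
  \<integral>_{|y| \<ge> 1} |y|^-2p dy, which the layer-cake formula evaluates to d \<omega>_d / (2p - d).\<close>

lemma nn_integral_layer_cake:
  fixes f :: "'a \<Rightarrow> real"
  assumes "sigma_finite_measure M" and [measurable]: "f \<in> borel_measurable M"
    and "\<And>x. 0 \<le> f x"
  shows "(\<integral>\<^sup>+x. ennreal (f x) \<partial>M) = (\<integral>\<^sup>+t. emeasure M {x \<in> space M. 0 < t \<and> t < f x} \<partial>lborel)"
proof -
  interpret pair_sigma_finite lborel M
    using assms(1) by (simp add: pair_sigma_finite_def lborel.sigma_finite_measure_axioms)
  have "(\<integral>\<^sup>+x. ennreal (f x) \<partial>M) = (\<integral>\<^sup>+x. \<integral>\<^sup>+t. indicator {0<..<f x} t \<partial>lborel \<partial>M)"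
    using assms(3) by (intro nn_integral_cong) (simp add: emeasure_lborel_Ioo)
  also have "\<dots> = (\<integral>\<^sup>+t. \<integral>\<^sup>+x. indicator {0<..<f x} t \<partial>M \<partial>lborel)"
    by (rule Fubini') (simp add: indicator_def case_prod_beta)
  also have "\<dots> = (\<integral>\<^sup>+t. emeasure M {x \<in> space M. 0 < t \<and> t < f x} \<partial>lborel)"
  proof (rule nn_integral_cong)
    fix t :: real
    have "(\<integral>\<^sup>+x. indicator {0<..<f x} t \<partial>M) = (\<integral>\<^sup>+x. indicator {x \<in> space M. 0 < t \<and> t < f x} x \<partial>M)"
      by (intro nn_integral_cong) (simp add: indicator_def)
    also have "\<dots> = emeasure M {x \<in> space M. 0 < t \<and> t < f x}"
      by (rule nn_integral_indicator) measurable
    finally show "(\<integral>\<^sup>+x. indicator {0<..<f x} t \<partial>M) = emeasure M {x \<in> space M. 0 < t \<and> t < f x}" .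
  qed
  finally show ?thesis .
qed

lemma scaled_gauss_eq_prod_normal_density:
  fixes u :: "'a::euclidean_space"
  assumes "\<sigma> > 0"
  shows "(2 * pi) powr (- real DIM('a) / 2) * exp (- (norm u)\<^sup>2 / (2 * \<sigma>\<^sup>2))
       = (\<Prod>b\<in>Basis. \<sigma> * normal_density 0 \<sigma> (u \<bullet> b))"
proof -
  have "(norm u)\<^sup>2 = (\<Sum>b\<in>Basis. (u \<bullet> b)\<^sup>2)"
    unfolding power2_norm_eq_inner by (subst euclidean_inner) (simp add: power2_eq_square)
  then have exp_eq: "exp (- (norm u)\<^sup>2 / (2 * \<sigma>\<^sup>2)) = (\<Prod>b\<in>Basis. exp (- (u \<bullet> b)\<^sup>2 / (2 * \<sigma>\<^sup>2)))"
    by (simp add: exp_sum[symmetric] sum_negf sum_divide_distrib)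
  have "(2 * pi) powr (1/2) = sqrt (2 * pi)"
    by (rule powr_half_sqrt) simp
  then have half: "(2 * pi) powr (- (1/2)) = 1 / sqrt (2 * pi)"
    unfolding powr_minus by (simp only: inverse_eq_divide)
  have "(2 * pi) powr (- real DIM('a) / 2) = ((2 * pi) powr (- (1/2))) powr real DIM('a)"
    by (simp add: powr_powr)
  also have "\<dots> = ((2 * pi) powr (- (1/2))) ^ DIM('a)"
    by (rule powr_realpow) simp
  finally have const_eq: "(2 * pi) powr (- real DIM('a) / 2) = (\<Prod>b\<in>(Basis::'a set). 1 / sqrt (2 * pi))"
    by (simp only: half prod_constant)
  have density_eq: "\<sigma> * normal_density 0 \<sigma> t = 1 / sqrt (2 * pi) * exp (- (t\<^sup>2) / (2 * \<sigma>\<^sup>2))" for t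
    using assms by (simp add: normal_density_def real_sqrt_mult)
  show ?thesis
    unfolding const_eq exp_eq density_eq prod.distrib by (rule refl)
qed

lemma nn_integral_scaled_gauss:
  assumes "\<sigma> > 0"
  shows "(\<integral>\<^sup>+u. ennreal ((2 * pi) powr (- real DIM('a) / 2) * exp (- (norm (u::'a::euclidean_space))\<^sup>2 / (2 * \<sigma>\<^sup>2))) \<partial>lborel)
       = ennreal (\<sigma> ^ DIM('a))"
proof -
  have "(\<integral>\<^sup>+u. ennreal ((2 * pi) powr (- real DIM('a) / 2) * exp (- (norm (u::'a))\<^sup>2 / (2 * \<sigma>\<^sup>2))) \<partial>lborel)
      = (\<integral>\<^sup>+u. (\<Prod>b\<in>Basis. ennreal (\<sigma> * normal_density 0 \<sigma> ((u::'a) \<bullet> b))) \<partial>lborel)"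
    by (rule nn_integral_cong, subst scaled_gauss_eq_prod_normal_density[OF assms], subst prod_ennreal)
       (use assms in auto)
  also have "\<dots> = (\<Prod>b\<in>(Basis::'a set). \<integral>\<^sup>+t. ennreal (\<sigma> * normal_density 0 \<sigma> t) \<partial>lborel)"
    by (rule nn_integral_lborel_prod) auto
  also have "(\<integral>\<^sup>+t. ennreal (\<sigma> * normal_density 0 \<sigma> t) \<partial>lborel) = ennreal \<sigma>"
    using assms by (subst nn_integral_eq_integral) auto
  finally show ?thesis
    using assms by (simp add: ennreal_power)
qed

lemma std_gauss_density_nonneg: "0 \<le> std_gauss_density u"
  by (simp add: std_gauss_density_def)

lemma borel_measurable_std_gauss_density [measurable]: "std_gauss_density \<in> borel_measurable borel"
  unfolding std_gauss_density_def by measurable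

lemma has_bochner_integral_std_gauss_density:
  "has_bochner_integral lborel (std_gauss_density :: 'a::euclidean_space \<Rightarrow> real) 1"
  using nn_integral_scaled_gauss[of 1, where 'a='a]
  by (intro has_bochner_integral_nn_integral) (auto simp: std_gauss_density_def)

lemmas integrable_std_gauss_density =
  integrable.intros[OF has_bochner_integral_std_gauss_density]

lemmas integral_std_gauss_density =
  has_bochner_integral_integral_eq[OF has_bochner_integral_std_gauss_density]

lemma integrable_std_gauss_density_mult_exp:
  "integrable lborel (\<lambda>u::'a::euclidean_space. std_gauss_density u * exp ((norm u)\<^sup>2 / 4))"
proof (rule integrableI_nonneg)
  have "std_gauss_density u * exp ((norm u)\<^sup>2 / 4) =
        (2 * pi) powr (- real DIM('a) / 2) * exp (- (norm u)\<^sup>2 / (2 * (sqrt 2)\<^sup>2))" for u :: 'a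
    by (simp add: std_gauss_density_def mult.assoc exp_add[symmetric])
  then show "(\<integral>\<^sup>+u. ennreal (std_gauss_density (u::'a) * exp ((norm u)\<^sup>2 / 4)) \<partial>lborel) < \<infinity>"
    by (simp only:) (subst nn_integral_scaled_gauss; simp)
qed (auto simp: std_gauss_density_nonneg)

lemma power_div_fact_le_exp:
  fixes x :: real
  assumes "0 \<le> x"
  shows "x ^ n / fact n \<le> exp x"
proof -
  have "(\<Sum>m\<in>{n}. x ^ m /\<^sub>R fact m) \<le> (\<Sum>m. x ^ m /\<^sub>R fact m)"
    using assms by (intro sum_le_suminf summable_exp_generic) auto
  then show ?thesis
    by (simp add: exp_def divide_inverse mult.commute)
qed

lemma exp_neg_square_le_powr:
  fixes r p :: real
  assumes "1 \<le> r" and "p \<le> 2 * real n"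
  shows "exp (- (r\<^sup>2 / 16)) \<le> fact n * 16 ^ n * r powr (- p)"
proof -
  have "(r\<^sup>2 / 16) ^ n / fact n \<le> exp (r\<^sup>2 / 16)"
    by (rule power_div_fact_le_exp) simp
  moreover have "(r\<^sup>2) ^ n = r ^ (2 * n)"
    by (simp add: power_mult)
  ultimately have "r ^ (2 * n) \<le> fact n * 16 ^ n * exp (r\<^sup>2 / 16)"
    by (simp add: power_divide field_simps)
  moreover have "r powr p \<le> r powr real (2 * n)"
    using assms by (intro powr_mono) auto
  moreover have "r powr real (2 * n) = r ^ (2 * n)"
    using assms(1) powr_realpow[of r "2 * n"] by simp
  ultimately have "r powr p \<le> fact n * 16 ^ n * exp (r\<^sup>2 / 16)"
    by linarith
  then show ?thesis
    using assms(1) by (simp add: powr_minus exp_minus field_simps)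
qed

lemma one_le_powr_neg:
  fixes t a :: real
  assumes "0 < t" "t \<le> 1" "0 \<le> a"
  shows "1 \<le> t powr (- a)"
  using assms powr_le1[of a t] by (simp add: powr_minus one_le_inverse)

definition tail_powr :: "real \<Rightarrow> real \<Rightarrow> 'a::real_normed_vector \<Rightarrow> real" where
  "tail_powr p r y = indicator {y. r \<le> norm y} y / norm y powr p"

lemma borel_measurable_tail_powr [measurable]:
  "tail_powr p r \<in> borel_measurable (borel :: 'a::euclidean_space measure)"
  unfolding tail_powr_def by measurable

lemma tail_powr_nonneg: "0 \<le> tail_powr p r y"
  by (simp add: tail_powr_def)

lemma tail_powr_eq:
  assumes "0 < r"
  shows "tail_powr p r y = (if r \<le> norm y then norm y powr (- p) else 0)"
  using assms by (simp add: tail_powr_def powr_minus divide_inverse)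

lemma tail_powr_le_one:
  assumes "0 \<le> p"
  shows "tail_powr p 1 y \<le> 1"
  using assms ge_one_powr_ge_zero[of "norm y" p]
  by (auto simp: tail_powr_eq powr_minus inverse_le_1_iff)

lemma tail_powr_mult:
  assumes "0 < r"
  shows "tail_powr p r y * tail_powr q r y = tail_powr (p + q) r y"
  using assms by (simp add: tail_powr_eq flip: powr_add)

lemma tail_powr_scaleR:
  assumes "0 < b"
  shows "tail_powr p b (b *\<^sub>R z) = b powr (- p) * tail_powr p 1 z"
  using assms
  by (auto simp: tail_powr_def powr_mult powr_minus divide_inverse split: split_indicator)

lemma isCont_tail_powr:
  assumes "norm y \<noteq> 1"
  shows "isCont (tail_powr p 1) y"
proof (cases "norm y < 1")
  case True
  then have "\<forall>\<^sub>F z in nhds y. norm z < 1"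
    using eventually_nhds_in_open[of "ball 0 1" y] by simp
  then have "\<forall>\<^sub>F z in nhds y. tail_powr p 1 z = 0"
    by (rule eventually_mono) (simp add: tail_powr_eq)
  then show ?thesis
    by (subst isCont_cong) auto
next
  case False
  with assms have "1 < norm y" by simp
  then have "\<forall>\<^sub>F z in nhds y. 1 < norm z"
    using eventually_nhds_in_open[of "- cball 0 1" y] by (simp add: not_le open_Compl)
  then have "\<forall>\<^sub>F z in nhds y. tail_powr p 1 z = norm z powr (- p)"
    by (rule eventually_mono) (simp add: tail_powr_eq)
  moreover have "isCont (\<lambda>z. norm z powr (- p)) y"
    using \<open>1 < norm y\<close> by (intro continuous_intros) auto
  ultimately show ?thesis
    by (subst isCont_cong) auto
qed

text \<open>Either |u| \<le> |y|/2, and then y + v stays at distance |y|/2 from the origin, or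
  1 \<le> exp (|u|^2/4 - |y|^2/16), and the Gaussian factor in |y| is traded for |y|^-p.\<close>
lemma tail_powr_shift_le:
  fixes y u v :: "'a::real_normed_vector"
  assumes p: "0 < p" "p \<le> 2 * real n" and v: "norm v \<le> norm u" and y: "1 \<le> norm y"
  shows "tail_powr p 1 (y + v) \<le> (2 powr p + fact n * 16 ^ n * exp ((norm u)\<^sup>2 / 4)) * norm y powr (- p)"
proof (cases "norm u \<le> norm y / 2")
  case True
  have "norm y / 2 \<le> norm (y + v)"
    using norm_diff_ineq[of y v] v True by simp
  then have "tail_powr p 1 (y + v) \<le> (norm y / 2) powr (- p)"
    using p y by (auto simp: tail_powr_eq intro!: powr_mono2')
  also have "\<dots> = 2 powr p * norm y powr (- p)"
    by (simp add: powr_divide powr_minus field_simps)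
  finally show ?thesis
    unfolding distrib_right by (rule add_increasing2[rotated]) simp
next
  case False
  then have "(norm y / 2)\<^sup>2 \<le> (norm u)\<^sup>2"
    using y by (intro power_mono) auto
  then have "1 \<le> exp ((norm u)\<^sup>2 / 4) * exp (- ((norm y)\<^sup>2 / 16))"
    by (simp add: exp_add[symmetric] power_divide)
  also have "\<dots> \<le> exp ((norm u)\<^sup>2 / 4) * (fact n * 16 ^ n * norm y powr (- p))"
    using y p by (intro mult_left_mono exp_neg_square_le_powr) auto
  also have "\<dots> = fact n * 16 ^ n * exp ((norm u)\<^sup>2 / 4) * norm y powr (- p)"
    by (simp only: mult_ac)
  finally have "tail_powr p 1 (y + v) \<le> fact n * 16 ^ n * exp ((norm u)\<^sup>2 / 4) * norm y powr (- p)"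
    using tail_powr_le_one[of p "y + v"] p by linarith
  then show ?thesis
    unfolding distrib_right by (rule add_increasing[rotated]) simp
qed

text \<open>In the notation above, g = tail_powr p 1 and K_b = smoothed_tail_powr p b.\<close>
definition smoothed_tail_powr :: "real \<Rightarrow> real \<Rightarrow> 'a::euclidean_space \<Rightarrow> real" where
  "smoothed_tail_powr p b y = (\<integral>u. std_gauss_density u * tail_powr p 1 (y + (1 / b) *\<^sub>R u) \<partial>lborel)"

lemma borel_measurable_smoothed_tail_powr [measurable]:
  "smoothed_tail_powr p b \<in> borel_measurable borel"
  unfolding smoothed_tail_powr_def by measurable

lemma smoothed_tail_powr_nonneg: "0 \<le> smoothed_tail_powr p b y"
  unfolding smoothed_tail_powr_def
  by (intro integral_nonneg_AE AE_I2) (simp add: std_gauss_density_nonneg tail_powr_nonneg)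

lemma tendsto_smoothed_tail_powr:
  fixes y :: "'a::euclidean_space"
  assumes "norm y \<noteq> 1" and "0 \<le> p"
  shows "((\<lambda>b. smoothed_tail_powr p b y) \<longlongrightarrow> tail_powr p 1 y) at_top"
proof -
  have shift: "((\<lambda>b::real. y + (1 / b) *\<^sub>R u) \<longlongrightarrow> y) at_top" for u :: 'a
    using tendsto_add[OF tendsto_const tendsto_scaleR[OF tendsto_divide_0[OF tendsto_const
          filterlim_at_top_imp_at_infinity[OF filterlim_ident]] tendsto_const]]
    by simp
  have "((\<lambda>b. \<integral>u. std_gauss_density u * tail_powr p 1 (y + (1 / b) *\<^sub>R u) \<partial>lborel)
        \<longlongrightarrow> (\<integral>u. std_gauss_density (u::'a) * tail_powr p 1 y \<partial>lborel)) at_top"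
  proof (rule integral_dominated_convergence_at_top[where w = std_gauss_density])
    show "AE u in lborel. ((\<lambda>b. std_gauss_density u * tail_powr p 1 (y + (1 / b) *\<^sub>R u))
            \<longlongrightarrow> std_gauss_density u * tail_powr p 1 y) at_top"
      using assms(1) by (intro AE_I2 tendsto_mult tendsto_const isCont_tendsto_compose[OF _ shift] isCont_tail_powr)
    show "\<forall>\<^sub>F b in at_top. AE u in lborel.
            norm (std_gauss_density u * tail_powr p 1 (y + (1 / b) *\<^sub>R u)) \<le> std_gauss_density u"
      using assms(2)
      by (intro always_eventually allI AE_I2)
         (auto simp: std_gauss_density_nonneg tail_powr_nonneg abs_mult intro!: mult_left_le tail_powr_le_one)
  qed (auto simp: integrable_std_gauss_density)
  then show ?thesis
    by (simp add: smoothed_tail_powr_def integral_std_gauss_density)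
qed

lemma smoothed_tail_powr_le:
  assumes "0 < p" and "p \<le> 2 * real DIM('a::euclidean_space)"
  obtains C where "\<And>b y. 1 \<le> b \<Longrightarrow> 1 \<le> norm (y::'a) \<Longrightarrow> smoothed_tail_powr p b y \<le> C * norm y powr (- p)"
proof
  define c :: real where "c = fact DIM('a) * 16 ^ DIM('a)"
  define h where "h u = 2 powr p * std_gauss_density u + c * (std_gauss_density u * exp ((norm u)\<^sup>2 / 4))"
    for u :: 'a
  have h_integrable: "integrable lborel h"
    unfolding h_def
    by (intro Bochner_Integration.integrable_add integrable_mult_right
          integrable_std_gauss_density integrable_std_gauss_density_mult_exp)
  fix b :: real and y :: 'a
  assume b: "1 \<le> b" and y: "1 \<le> norm y"
  have "smoothed_tail_powr p b y \<le> (\<integral>u. h u * norm y powr (- p) \<partial>lborel)"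
    unfolding smoothed_tail_powr_def
  proof (rule integral_mono)
    show "integrable lborel (\<lambda>u::'a. std_gauss_density u * tail_powr p 1 (y + (1 / b) *\<^sub>R u))"
      using assms(1)
      by (intro Bochner_Integration.integrable_bound[OF integrable_std_gauss_density] AE_I2)
         (auto simp: std_gauss_density_nonneg tail_powr_nonneg abs_mult intro!: mult_left_le tail_powr_le_one)
    fix u :: 'a
    have "norm ((1 / b) *\<^sub>R u) \<le> norm u"
      using b mult_left_mono[of 1 b "norm u"] by (auto simp: divide_le_eq)
    then have "tail_powr p 1 (y + (1 / b) *\<^sub>R u)
          \<le> (2 powr p + c * exp ((norm u)\<^sup>2 / 4)) * norm y powr (- p)"
      unfolding c_def using assms y by (intro tail_powr_shift_le) auto
    then show "std_gauss_density u * tail_powr p 1 (y + (1 / b) *\<^sub>R u) \<le> h u * norm y powr (- p)"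
      using mult_left_mono[OF _ std_gauss_density_nonneg]
      by (fastforce simp: h_def algebra_simps)
  qed (use h_integrable in auto)
  then show "smoothed_tail_powr p b y \<le> integral\<^sup>L lborel h * norm y powr (- p)"
    by simp
qed

lemma tail_powr_superlevel_set:
  assumes "0 < t" "t < 1" "0 < q"
  shows "{y::'a::real_normed_vector. t < tail_powr q 1 y} = ball 0 (t powr (- 1 / q)) - ball 0 1"
proof -
  have level: "t < r powr (- q) \<longleftrightarrow> r < t powr (- 1 / q)" if "0 < r" for r :: real
  proof -
    have "t < r powr (- q) \<longleftrightarrow> ln t < ln (r powr (- q))"
      using assms that by (subst ln_less_cancel_iff) auto
    also have "\<dots> \<longleftrightarrow> ln r < - 1 / q * ln t"
      using assms that by (auto simp: ln_powr field_simps)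
    also have "\<dots> \<longleftrightarrow> ln r < ln (t powr (- 1 / q))"
      using assms by (simp add: ln_powr)
    also have "\<dots> \<longleftrightarrow> r < t powr (- 1 / q)"
      using assms that by (subst ln_less_cancel_iff) auto
    finally show ?thesis .
  qed
  have "t < tail_powr q 1 y \<longleftrightarrow> 1 \<le> norm y \<and> norm y < t powr (- 1 / q)" for y :: 'a
  proof (cases "1 \<le> norm y")
    case True
    then have "0 < norm y"
      by linarith
    have "tail_powr q 1 y = norm y powr (- q)"
      using True by (simp add: tail_powr_eq)
    then have "t < tail_powr q 1 y \<longleftrightarrow> norm y < t powr (- 1 / q)"
      using level[OF \<open>0 < norm y\<close>] by (simp only:)
    with True show ?thesis
      by blast
  next
    case False
    then show ?thesis
      using assms by (simp add: tail_powr_eq)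
  qed
  then show ?thesis
    by (simp add: set_eq_iff not_less conj_commute)
qed

lemma emeasure_tail_powr_superlevel_set:
  assumes "0 < q"
  shows "emeasure lborel {y::'a::euclidean_space. 0 < t \<and> t < tail_powr q 1 y}
       = ennreal (unit_ball_vol (real DIM('a)) * (t powr (- real DIM('a) / q) - 1)) * indicator {0<..<1} t"
proof (cases "0 < t \<and> t < 1")
  case True
  define R where "R = t powr (- 1 / q)"
  define V where "V = unit_ball_vol (real DIM('a))"
  have "1 \<le> R"
    unfolding R_def using True assms one_le_powr_neg[of t "1 / q"] by simp
  have "R ^ DIM('a) = R powr real DIM('a)"
    using \<open>1 \<le> R\<close> by (simp add: powr_realpow)
  also have "\<dots> = t powr (- real DIM('a) / q)"
    by (simp add: R_def powr_powr)
  finally have R_power: "R ^ DIM('a) = t powr (- real DIM('a) / q)" .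
  have "{y::'a. 0 < t \<and> t < tail_powr q 1 y} = ball 0 R - ball 0 1"
    using True tail_powr_superlevel_set[of t q] assms by (simp add: R_def)
  then have "emeasure lborel {y::'a. 0 < t \<and> t < tail_powr q 1 y}
      = emeasure lborel (ball (0::'a) R) - emeasure lborel (ball (0::'a) 1)"
    by (simp only:) (rule emeasure_Diff, use \<open>1 \<le> R\<close> emeasure_lborel_ball_finite[of "0::'a" 1] in auto)
  also have "\<dots> = ennreal (V * R ^ DIM('a)) - ennreal V"
    using \<open>1 \<le> R\<close> by (simp add: emeasure_ball V_def)
  also have "\<dots> = ennreal (V * R ^ DIM('a) - V)"
    by (rule ennreal_minus) (simp add: V_def)
  also have "V * R ^ DIM('a) - V = V * (t powr (- real DIM('a) / q) - 1)"
    by (simp add: R_power right_diff_distrib)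
  finally show ?thesis
    using True by (simp add: V_def)
next
  case False
  have "{y::'a. 0 < t \<and> t < tail_powr q 1 y} = {}"
  proof (intro equals0I)
    fix y :: 'a
    assume "y \<in> {y. 0 < t \<and> t < tail_powr q 1 y}"
    with False tail_powr_le_one[of q y] assms show False
      by auto
  qed
  with False show ?thesis
    by (simp only: emeasure_empty) simp
qed

lemma has_bochner_integral_tail_powr:
  assumes "real DIM('a::euclidean_space) < q"
  shows "has_bochner_integral lborel (tail_powr q 1 :: 'a \<Rightarrow> real)
           (real DIM('a) * unit_ball_vol (real DIM('a)) / (q - real DIM('a)))"
proof (rule has_bochner_integral_nn_integral)
  define V where "V = unit_ball_vol (real DIM('a))"
  define a where "a = real DIM('a) / q"
  have "0 < q" using assms DIM_positive[where 'a='a] by linarith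
  have "0 < a" "a < 1" using assms \<open>0 < q\<close> by (auto simp: a_def field_simps)
  have "(\<integral>\<^sup>+y. ennreal (tail_powr q 1 (y::'a)) \<partial>lborel)
      = (\<integral>\<^sup>+t. emeasure lborel {y::'a. 0 < t \<and> t < tail_powr q 1 y} \<partial>lborel)"
    using nn_integral_layer_cake[of lborel "tail_powr q 1"]
    by (simp add: tail_powr_nonneg lborel.sigma_finite_measure_axioms)
  also have "\<dots> = (\<integral>\<^sup>+t. ennreal (V * (t powr (- a) - 1)) * indicator {0<..<1} t \<partial>lborel)"
    using emeasure_tail_powr_superlevel_set[OF \<open>0 < q\<close>, where 'a='a]
    by (simp add: V_def a_def)
  also have "\<dots> = ennreal (V * (1 / (1 - a) - 1))"
  proof (rule nn_integral_has_integral_lebesgue')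
    show "0 \<le> V * (t powr (- a) - 1)" if "t \<in> {0<..<1}" for t
      using that \<open>0 < a\<close> one_le_powr_neg[of t a] by (simp add: V_def)
    have "((\<lambda>t. t powr (- a) - 1) has_integral (1 / (1 - a) - 1)) {0..1}"
      using has_integral_diff[OF has_integral_powr_from_0[of "- a" 1] has_integral_const_real[of 1 0 1]]
        \<open>a < 1\<close> by simp
    then have "((\<lambda>t. V * (t powr (- a) - 1)) has_integral V * (1 / (1 - a) - 1)) {0..1}"
      by (rule has_integral_mult_right)
    then show "((\<lambda>t. V * (t powr (- a) - 1)) has_integral V * (1 / (1 - a) - 1)) {0<..<1}"
      by (simp add: has_integral_Icc_iff_Ioo)
  qed
  also have "V * (1 / (1 - a) - 1) = real DIM('a) * V / (q - real DIM('a))"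
    using \<open>a < 1\<close> \<open>0 < q\<close> by (simp add: a_def field_simps)
  finally show "(\<integral>\<^sup>+y. ennreal (tail_powr q 1 (y::'a)) \<partial>lborel)
      = ennreal (real DIM('a) * unit_ball_vol (real DIM('a)) / (q - real DIM('a)))"
    by (simp add: V_def)
qed (use assms in \<open>auto simp: tail_powr_nonneg\<close>)

lemma integral_lborel_dilation:
  fixes F :: "'a::euclidean_space \<Rightarrow> real"
  assumes "0 < b" and [measurable]: "F \<in> borel_measurable borel"
  shows "(\<integral>x. F x \<partial>lborel) = b ^ DIM('a) * (\<integral>y. F (b *\<^sub>R y) \<partial>lborel)"
proof -
  have "(\<integral>x. F x \<partial>lborel) = (\<integral>x. F x \<partial>density (distr lborel borel (\<lambda>x::'a. 0 + b *\<^sub>R x)) (\<lambda>_. \<bar>b\<bar> ^ DIM('a)))"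
    using lborel_affine[of b "0::'a"] assms(1) by simp
  also have "\<dots> = (\<integral>y. \<bar>b\<bar> ^ DIM('a) *\<^sub>R F (0 + b *\<^sub>R y) \<partial>lborel)"
    by (subst integral_density) (auto simp: integral_distr)
  finally show ?thesis
    using assms(1) by simp
qed

lemma Qfun_rescaled:
  assumes "0 < b"
  shows "b powr (2 * p - real DIM('a)) * Qfun TYPE('a) p b
       = (\<integral>y. tail_powr p 1 (y::'a::euclidean_space) * smoothed_tail_powr p b y \<partial>lborel)"
proof -
  have expectation: "(LINT u | (std_normal_vec::'a measure). indicator {y. b \<le> norm y} (x + u) / norm (x + u) powr p)
      = (\<integral>u. std_gauss_density u * tail_powr p b (x + u) \<partial>lborel)" for x :: 'a
    unfolding std_normal_vec_def
    by (subst integral_density) (auto simp: std_gauss_density_nonneg tail_powr_def)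
  have rescale: "tail_powr p b (b *\<^sub>R y) * (\<integral>u. std_gauss_density u * tail_powr p b (b *\<^sub>R y + u) \<partial>lborel)
      = b powr (- p) * b powr (- p) * (tail_powr p 1 y * smoothed_tail_powr p b y)" for y :: 'a
  proof -
    have "b *\<^sub>R y + u = b *\<^sub>R (y + (1 / b) *\<^sub>R u)" for u :: 'a
      using assms by (simp add: scaleR_add_right)
    then have "(\<integral>u. std_gauss_density u * tail_powr p b (b *\<^sub>R y + u) \<partial>lborel)
        = (\<integral>u. b powr (- p) * (std_gauss_density u * tail_powr p 1 (y + (1 / b) *\<^sub>R u)) \<partial>lborel)"
      using assms by (simp add: tail_powr_scaleR mult_ac)
    also have "\<dots> = b powr (- p) * smoothed_tail_powr p b y"
      by (simp add: smoothed_tail_powr_def)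
    finally show ?thesis
      using assms by (simp add: tail_powr_scaleR)
  qed
  have "Qfun TYPE('a) p b = (\<integral>x. tail_powr p b (x::'a) * (\<integral>u. std_gauss_density u * tail_powr p b (x + u) \<partial>lborel) \<partial>lborel)"
    unfolding Qfun_def set_lebesgue_integral_def
    by (intro Bochner_Integration.integral_cong) (simp_all add: expectation tail_powr_def)
  also have "\<dots> = b ^ DIM('a) * (b powr (- p) * b powr (- p))
                     * (\<integral>y. tail_powr p 1 (y::'a) * smoothed_tail_powr p b y \<partial>lborel)"
    using assms by (subst integral_lborel_dilation[of b]) (simp_all add: rescale)
  moreover have "b powr (2 * p - real DIM('a)) * (b ^ DIM('a) * (b powr (- p) * b powr (- p))) = 1"
  proof -
    have "b ^ DIM('a) = b powr real DIM('a)"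
      using assms by (simp add: powr_realpow)
    then have "b powr (2 * p - real DIM('a)) * (b ^ DIM('a) * (b powr (- p) * b powr (- p)))
        = b powr ((2 * p - real DIM('a)) + real DIM('a) + (- p) + (- p))"
      by (simp only: powr_add mult.assoc)
    then show ?thesis
      using assms by simp
  qed
  ultimately show ?thesis
    by (simp add: mult.assoc[symmetric])
qed

lemma tendsto_integral_tail_powr_mult_smoothed:
  assumes "real DIM('a::euclidean_space) < 2 * p" and "p \<le> 2 * real DIM('a)"
  shows "((\<lambda>b. \<integral>y. tail_powr p 1 (y::'a) * smoothed_tail_powr p b y \<partial>lborel)
           \<longlongrightarrow> real DIM('a) * unit_ball_vol (real DIM('a)) / (2 * p - real DIM('a))) at_top"
proof -
  have "0 < p"
    using assms(1) DIM_positive[where 'a='a] by linarith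
  obtain C where C: "\<And>b y. 1 \<le> b \<Longrightarrow> 1 \<le> norm (y::'a) \<Longrightarrow> smoothed_tail_powr p b y \<le> C * norm y powr (- p)"
    using smoothed_tail_powr_le[OF \<open>0 < p\<close> assms(2)] by blast
  have square: "tail_powr p 1 y * tail_powr p 1 y = tail_powr (2 * p) 1 y" for y :: 'a
    unfolding mult_2 by (rule tail_powr_mult) simp
  have "sphere (0::'a) 1 \<in> null_sets lborel"
    using negligible_sphere[of "0::'a" 1]
    by (auto simp: negligible_iff_null_sets null_sets_completion_iff)
  then have "AE y in lborel. norm (y::'a) \<noteq> 1"
    by (rule AE_mp[OF AE_not_in]) simp
  then have pointwise: "AE y in lborel. ((\<lambda>b. tail_powr p 1 y * smoothed_tail_powr p b y)
                          \<longlongrightarrow> tail_powr (2 * p) 1 (y::'a)) at_top"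
    by (rule AE_mp) (use \<open>0 < p\<close> in \<open>auto simp flip: square intro!: tendsto_mult tendsto_smoothed_tail_powr\<close>)
  have dominated: "norm (tail_powr p 1 y * smoothed_tail_powr p b y) \<le> C * tail_powr (2 * p) 1 y"
    if "1 \<le> b" for b and y :: 'a
  proof (cases "1 \<le> norm y")
    case True
    then have "tail_powr p 1 y * smoothed_tail_powr p b y \<le> tail_powr p 1 y * (C * tail_powr p 1 y)"
      using C[OF that True] by (intro mult_left_mono) (simp_all add: tail_powr_eq)
    then show ?thesis
      by (simp add: tail_powr_nonneg smoothed_tail_powr_nonneg mult.left_commute flip: square)
  qed (simp add: tail_powr_eq)
  have "((\<lambda>b. \<integral>y. tail_powr p 1 (y::'a) * smoothed_tail_powr p b y \<partial>lborel)
           \<longlongrightarrow> (\<integral>y. tail_powr (2 * p) 1 (y::'a) \<partial>lborel)) at_top"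
  proof (rule integral_dominated_convergence_at_top[where w = "\<lambda>y. C * tail_powr (2 * p) 1 y"])
    show "\<forall>\<^sub>F b in at_top. AE y in lborel.
            norm (tail_powr p 1 y * smoothed_tail_powr p b y) \<le> C * tail_powr (2 * p) 1 (y::'a)"
      using eventually_ge_at_top[of "1::real"] by (rule eventually_mono) (rule AE_I2, erule dominated)
    show "integrable lborel (\<lambda>y::'a. C * tail_powr (2 * p) 1 y)"
      using integrable.intros[OF has_bochner_integral_tail_powr[OF assms(1)]] by simp
  qed (use pointwise in simp_all)
  then show ?thesis
    by (simp add: has_bochner_integral_integral_eq[OF has_bochner_integral_tail_powr[OF assms(1)]])
qed

theorem lemma6p4:
  fixes p :: real
  assumes "real DIM('a::euclidean_space) / 2 < p" and "p < real DIM('a)"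
  shows "((\<lambda>b. b powr (2 * p - real DIM('a)) * Qfun TYPE('a) p b)
           \<longlongrightarrow> real DIM('a) * measure lborel (ball (0::'a) 1) / (2 * p - real DIM('a)))
         at_top"
proof -
  have "measure lborel (ball (0::'a) 1) = unit_ball_vol (real DIM('a))"
    by (simp add: measure_def emeasure_ball)
  moreover have "((\<lambda>b. \<integral>y. tail_powr p 1 (y::'a) * smoothed_tail_powr p b y \<partial>lborel)
      \<longlongrightarrow> real DIM('a) * unit_ball_vol (real DIM('a)) / (2 * p - real DIM('a))) at_top"
    using assms by (intro tendsto_integral_tail_powr_mult_smoothed) auto
  moreover have "\<forall>\<^sub>F b in at_top. (\<integral>y. tail_powr p 1 (y::'a) * smoothed_tail_powr p b y \<partial>lborel)
                  = b powr (2 * p - real DIM('a)) * Qfun TYPE('a) p b"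
    using eventually_gt_at_top[of "0::real"] by eventually_elim (simp add: Qfun_rescaled)
  ultimately show ?thesis
    by (simp add: tendsto_cong)
qed

end
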